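(* Suppose $J$ satisfies (J) and there are $\beta\in(N,N+1]$ and $c_1,c_2,R>0$ with $c_1\eta^{-\beta}\le J(\eta)\le c_2\eta^{-\beta}$ for $\eta\ge R$. Then there are positive constants $C_1,C_2,H$ such that for all $h\ge H$, both $I_*(h):=\int_0^h\int_h^\infty J_*(r-\rho)d\rho dr$ and $\tilde I(h):=\int_0^h\int_h^\infty\tilde J(r,\rho)d\rho dr$ lie in $[C_1 g(h),C_2 g(h)]$, where $g(h)=h^{N+1-\beta}$ if $\beta\in(N,N+1)$ and $g(h)=\ln h$ if $\beta=N+1$.
   Context: $N\ge2$, $B_\rho=\{|x|<\rho\}\subset\mathbb R^N$. (J): $J\in C(\mathbb R_+)\cap L^\infty(\mathbb R_+)$, $J\ge0$, $J(0)>0$, $\int_{\mathbb R^N}J(|x|)dx=1$. $\tilde J(r,\rho)=\int_{\partial B_\rho}J(|x-y|)dS_y$ for $|x|=r$. $J_*(l)=\int_{\mathbb R^{N-1}}J(|(l,x')|)dx'$, $l\in\mathbb R$. *)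

theory Defs
  imports "HOL-Analysis.Analysis"
begin

text \<open>The ambient space R^N is modelled as the Euclidean space
  real \<times> (real^'m), so N = CARD('m) + 1 \<ge> 2 and R^(N-1) = real^'m; a point (l, x')
  of R^N is literally a pair. All quantities of interest are nonnegative, so they
  are taken as nonnegative (ennreal-valued) Lebesgue integrals.\<close>

definition dimN :: "'m::finite itself \<Rightarrow> nat" where
  "dimN _ = CARD('m) + 1"

text \<open>Surface integral over the sphere of radius rho centred at 0 in R^N, via the
  standard cone-measure description of the surface measure on the unit sphere:
  the integral over the unit sphere of f equals N times the integral over the unit
  ball of f(z/|z|); the sphere of radius rho carries rho^(N-1) times this.\<close>
definition sphere_int :: "'m::finite itself \<Rightarrow> real \<Rightarrow> (real \<times> (real^'m) \<Rightarrow> ennreal) \<Rightarrow> ennreal" where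
  "sphere_int t \<rho> f = ennreal (\<rho> ^ (dimN t - 1) * real (dimN t)) *
     (\<integral>\<^sup>+ z. indicator (ball 0 1) z * f (\<rho> *\<^sub>R (z /\<^sub>R norm z)) \<partial>lborel)"

definition Jstar :: "'m::finite itself \<Rightarrow> (real \<Rightarrow> real) \<Rightarrow> real \<Rightarrow> ennreal" where
  "Jstar t J l = (\<integral>\<^sup>+ x'. ennreal (J (norm (l, x' :: real^'m))) \<partial>lborel)"

text \<open>tilde J(r,rho) = integral over the sphere of radius rho of J(|x-y|) dS_y, for a
  point x with |x| = r (we take x = (r,0); the value does not depend on the choice
  by rotation invariance).\<close>
definition Jtilde :: "'m::finite itself \<Rightarrow> (real \<Rightarrow> real) \<Rightarrow> real \<Rightarrow> real \<Rightarrow> ennreal" where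
  "Jtilde t J r \<rho> = sphere_int t \<rho> (\<lambda>y. ennreal (J (norm ((r, 0 :: real^'m) - y))))"

definition Istar :: "'m::finite itself \<Rightarrow> (real \<Rightarrow> real) \<Rightarrow> real \<Rightarrow> ennreal" where
  "Istar t J h = (\<integral>\<^sup>+ r. indicator {0..h} r *
      (\<integral>\<^sup>+ \<rho>. indicator {h..} \<rho> * Jstar t J (r - \<rho>) \<partial>lborel) \<partial>lborel)"

definition Itilde :: "'m::finite itself \<Rightarrow> (real \<Rightarrow> real) \<Rightarrow> real \<Rightarrow> ennreal" where
  "Itilde t J h = (\<integral>\<^sup>+ r. indicator {0..h} r *
      (\<integral>\<^sup>+ \<rho>. indicator {h..} \<rho> * Jtilde t J r \<rho> \<partial>lborel) \<partial>lborel)"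

definition gfun :: "nat \<Rightarrow> real \<Rightarrow> real \<Rightarrow> real" where
  "gfun N \<beta> h = (if \<beta> = real N + 1 then ln h else h powr (real N + 1 - \<beta>))"

end

theory Submission
  imports Defs
begin

text \<open>Tonelli's theorem turns both double integrals into integrals of J(|x|) over R^N against a
  weight in x: the length of the set of r in [0,h] with |r e_1 - x| \<ge> h for Itilde, and with
  r - x_1 \<ge> h for Istar. The second weight is below the first, and both are at most min(h, |x|).
  Since J \<le> c2 |x|^(-\<beta>) outside the ball of radius R, polar coordinates bound Itilde(h) by
  R + C Q(h), where Q(h) = int_R^oo \<rho>^(N-1-\<beta>) min(h, \<rho>) d\<rho>. Conversely, (l, x') has norm at most
  sqrt 2 |l| on the ball |x'| < |l| of R^(N-1), so J_*(l) \<ge> c |l|^(N-1-\<beta>) for |l| \<ge> R, and this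
  gives Istar(h) \<ge> c Q(h). Finally Q(h) grows like h^(N+1-\<beta>) for \<beta> < N+1 and like ln h for
  \<beta> = N+1.\<close>

lemma measurable_fst_borel[measurable]:
  "fst \<in> (borel :: ('a::second_countable_topology \<times> 'b::second_countable_topology) measure) \<rightarrow>\<^sub>M borel"
  by (subst borel_prod[symmetric]) simp

lemma measurable_snd_borel[measurable]:
  "snd \<in> (borel :: ('a::second_countable_topology \<times> 'b::second_countable_topology) measure) \<rightarrow>\<^sub>M borel"
  by (subst borel_prod[symmetric]) simp

lemma borel_measurable_lborel_pair:
  fixes f :: "'a::euclidean_space \<times> 'b::euclidean_space \<Rightarrow> ennreal"
  assumes "f \<in> borel_measurable borel"
  shows "f \<in> borel_measurable (lborel \<Otimes>\<^sub>M lborel)"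
  by (subst measurable_cong_sets[OF sets_pair_measure_cong[OF sets_lborel sets_lborel] refl])
     (simp add: borel_prod assms)

lemma nn_integral_lborel_swap:
  fixes f :: "'a::euclidean_space \<Rightarrow> 'b::euclidean_space \<Rightarrow> ennreal"
  assumes "(\<lambda>p. f (fst p) (snd p)) \<in> borel_measurable borel"
  shows "(\<integral>\<^sup>+x. \<integral>\<^sup>+y. f x y \<partial>lborel \<partial>lborel) = (\<integral>\<^sup>+y. \<integral>\<^sup>+x. f x y \<partial>lborel \<partial>lborel)"
proof -
  have "(\<lambda>(x, y). f x y) \<in> borel_measurable (lborel \<Otimes>\<^sub>M lborel)"
    unfolding case_prod_beta' by (rule borel_measurable_lborel_pair[OF assms])
  from lborel_pair.Fubini'[OF this] show ?thesis by simp
qed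

lemma nn_integral_lborel_affine:
  fixes f :: "'a::euclidean_space \<Rightarrow> ennreal"
  assumes [measurable]: "f \<in> borel_measurable borel" and c: "c \<noteq> 0"
  shows "(\<integral>\<^sup>+x. f x \<partial>lborel) = ennreal (\<bar>c\<bar> ^ DIM('a)) * (\<integral>\<^sup>+x. f (t + c *\<^sub>R x) \<partial>lborel)"
  by (subst lborel_affine[OF c, of t]) (simp add: nn_integral_density nn_integral_distr nn_integral_cmult)

lemma nn_integral_lborel_reflect:
  fixes f :: "'a::euclidean_space \<Rightarrow> ennreal"
  assumes "f \<in> borel_measurable borel"
  shows "(\<integral>\<^sup>+x. f x \<partial>lborel) = (\<integral>\<^sup>+x. f (t - x) \<partial>lborel)"
  using nn_integral_lborel_affine[OF assms, of "-1" t] by simp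

lemma nn_integral_powr_tail:
  assumes a: "a > 0" and q: "q < -1"
  shows "(\<integral>\<^sup>+x. indicator {a..} x * ennreal (x powr q) \<partial>lborel) = ennreal (a powr (q+1) / -(q+1))"
proof -
  have "(\<integral>\<^sup>+x. indicator {a..} x * ennreal (x powr q) \<partial>lborel) = ennreal (0 - a powr (q+1) / (q+1))"
    unfolding mult.commute[of "indicator _ _"]
  proof (rule nn_integral_FTC_atLeast)
    fix x assume "a \<le> x"
    then show "((\<lambda>x. x powr (q+1) / (q+1)) has_real_derivative x powr q) (at x)"
      using a q by (auto intro!: derivative_eq_intros)
  next
    have "((\<lambda>x::real. x powr (q+1)) \<longlongrightarrow> 0) at_top"
      using q by (intro tendsto_neg_powr filterlim_ident) auto
    then show "((\<lambda>x::real. x powr (q+1) / (q+1)) \<longlongrightarrow> 0) at_top"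
      using tendsto_divide_zero by fastforce
  qed auto
  then show ?thesis by (simp add: minus_divide_right)
qed

lemma nn_integral_power_tail_eq_one:
  assumes "d \<ge> 1"
  shows "(\<integral>\<^sup>+l. indicator {1<..} l * ennreal (real d / l ^ (d+1)) \<partial>lborel) = 1"
proof -
  have "(\<integral>\<^sup>+l. indicator {1<..} l * ennreal (real d / l ^ (d+1)) \<partial>lborel)
      = (\<integral>\<^sup>+l. ennreal (real d) * (indicator {1..} l * ennreal (l powr (- real (d+1)))) \<partial>lborel)"
  proof (intro nn_integral_cong_AE eventually_mono[OF AE_lborel_singleton[of 1]])
    fix l :: real assume "l \<noteq> 1"
    have "l > 0 \<Longrightarrow> real d / l ^ (d+1) = real d * l powr (- real (d+1))"
      by (simp only: powr_minus powr_realpow divide_inverse)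
    then show "indicator {1<..} l * ennreal (real d / l ^ (d+1))
        = ennreal (real d) * (indicator {1..} l * ennreal (l powr (- real (d+1))))"
      using \<open>l \<noteq> 1\<close> by (auto simp: indicator_def ennreal_mult[symmetric])
  qed
  also have "\<dots> = ennreal (real d) * ennreal (1 / real d)"
    using assms by (subst nn_integral_cmult) (auto simp: nn_integral_powr_tail)
  finally show ?thesis
    using assms by (simp add: ennreal_mult[symmetric])
qed

lemma sphere_integral_as_ball_integral:
  fixes G :: "'a::euclidean_space \<Rightarrow> ennreal"
  assumes [measurable]: "G \<in> borel_measurable borel" and \<rho>: "\<rho> > 0"
  shows "ennreal (\<rho> ^ (DIM('a) - 1) * real DIM('a)) *
           (\<integral>\<^sup>+z. indicator (ball 0 1) z * G (\<rho> *\<^sub>R (z /\<^sub>R norm z)) \<partial>lborel)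
       = (\<integral>\<^sup>+v. indicator (ball 0 \<rho>) v * (ennreal (real DIM('a) / \<rho>) * G (\<rho> *\<^sub>R (v /\<^sub>R norm v))) \<partial>lborel)"
proof -
  let ?d = "DIM('a)"
  have [measurable]: "ball 0 \<rho> \<in> sets (borel :: 'a measure)" by simp
  have "(\<integral>\<^sup>+z. indicator (ball 0 1) z * G (\<rho> *\<^sub>R (z /\<^sub>R norm z)) \<partial>lborel)
      = ennreal ((1/\<rho>) ^ ?d) * (\<integral>\<^sup>+v. indicator (ball 0 \<rho>) v * G (\<rho> *\<^sub>R (v /\<^sub>R norm v)) \<partial>lborel)"
    using nn_integral_lborel_affine[of "\<lambda>z. indicator (ball 0 1) z * G (\<rho> *\<^sub>R (z /\<^sub>R norm z))" "1/\<rho>" 0] \<rho>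
    by (simp add: indicator_def field_simps)
  moreover have "ennreal (\<rho> ^ (?d - 1) * real ?d) * ennreal ((1/\<rho>) ^ ?d) = ennreal (real ?d / \<rho>)"
  proof -
    have "\<rho> ^ (?d - 1) * real ?d * (1/\<rho>) ^ ?d = real ?d / \<rho>"
      using \<rho> DIM_positive[where 'a='a] by (cases ?d) (auto simp: field_simps)
    then show ?thesis using \<rho> by (simp add: ennreal_mult[symmetric])
  qed
  ultimately have "ennreal (\<rho> ^ (?d - 1) * real ?d) *
        (\<integral>\<^sup>+z. indicator (ball 0 1) z * G (\<rho> *\<^sub>R (z /\<^sub>R norm z)) \<partial>lborel)
      = ennreal (real ?d / \<rho>) * (\<integral>\<^sup>+v. indicator (ball 0 \<rho>) v * G (\<rho> *\<^sub>R (v /\<^sub>R norm v)) \<partial>lborel)"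
    by (simp add: mult.assoc[symmetric])
  also have "\<dots> = (\<integral>\<^sup>+v. ennreal (real ?d / \<rho>) * (indicator (ball 0 \<rho>) v * G (\<rho> *\<^sub>R (v /\<^sub>R norm v))) \<partial>lborel)"
    by (rule nn_integral_cmult[symmetric]) (simp, measurable)
  finally show ?thesis
    by (simp add: mult.left_commute)
qed

lemma nn_integral_radial_substitution:
  fixes G :: "'a::euclidean_space \<Rightarrow> ennreal" and v :: 'a
  assumes [measurable]: "G \<in> borel_measurable borel" and v: "v \<noteq> 0"
  shows "(\<integral>\<^sup>+\<rho>. indicator {h..} \<rho> * (indicator (ball 0 \<rho>) v * (ennreal (c / \<rho>) * G (\<rho> *\<^sub>R (v /\<^sub>R norm v)))) \<partial>lborel)
       = (\<integral>\<^sup>+l. indicator {1<..} l * (indicator {y. h \<le> norm y} (l *\<^sub>R v) * (ennreal (c / l) * G (l *\<^sub>R v))) \<partial>lborel)"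
proof -
  have nv: "norm v > 0" using v by simp
  define F where "F \<rho> = indicator {h..} \<rho> * (indicator (ball 0 \<rho>) v * (ennreal (c / \<rho>) * G (\<rho> *\<^sub>R (v /\<^sub>R norm v))))"
    for \<rho> :: real
  have [measurable]: "F \<in> borel_measurable borel"
    unfolding F_def indicator_def mem_ball dist_0_norm by measurable
  have "(\<integral>\<^sup>+\<rho>. F \<rho> \<partial>lborel) = ennreal \<bar>norm v\<bar> * (\<integral>\<^sup>+l. F (0 + norm v * l) \<partial>lborel)"
    using nv by (intro nn_integral_real_affine) auto
  also have "\<dots> = (\<integral>\<^sup>+l. ennreal (norm v) * F (norm v * l) \<partial>lborel)"
    by (simp add: nn_integral_cmult)
  also have "\<dots> = (\<integral>\<^sup>+l. indicator {1<..} l * (indicator {y. h \<le> norm y} (l *\<^sub>R v) * (ennreal (c / l) * G (l *\<^sub>R v))) \<partial>lborel)"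
  proof (rule nn_integral_cong)
    fix l :: real
    show "ennreal (norm v) * F (norm v * l) = indicator {1<..} l * (indicator {y. h \<le> norm y} (l *\<^sub>R v) * (ennreal (c / l) * G (l *\<^sub>R v)))"
    proof (cases "1 < l")
      case False
      then have "v \<notin> ball 0 (norm v * l)"
        using nv by (simp add: not_less mult_le_cancel_left1)
      then show ?thesis using False by (simp add: F_def)
    next
      case True
      have ball: "v \<in> ball 0 (norm v * l)" using nv True by simp
      have l: "\<bar>l\<bar> = l" using True by simp
      have scale: "(norm v * l) *\<^sub>R (v /\<^sub>R norm v) = l *\<^sub>R v" using nv by simp
      have "ennreal (norm v) * ennreal (c / (norm v * l)) = ennreal (c / l)"
        using nv by (simp add: ennreal_mult'[symmetric])
      then show ?thesis
        unfolding F_def scale using True ball l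
        by (cases "h \<le> norm v * l") (simp_all add: indicator_def mult.assoc[symmetric] mult.commute[of l])
    qed
  qed
  finally show ?thesis unfolding F_def .
qed

lemma nn_integral_polar_outside_ball:
  fixes G :: "'a::euclidean_space \<Rightarrow> ennreal"
  assumes [measurable]: "G \<in> borel_measurable borel" and h: "h > 0"
  shows "(\<integral>\<^sup>+\<rho>. indicator {h..} \<rho> * (ennreal (\<rho> ^ (DIM('a) - 1) * real DIM('a)) *
            (\<integral>\<^sup>+z. indicator (ball 0 1) z * G (\<rho> *\<^sub>R (z /\<^sub>R norm z)) \<partial>lborel)) \<partial>lborel)
       = (\<integral>\<^sup>+y. indicator {y. h \<le> norm y} y * G y \<partial>lborel)" (is "?L = ?I")
proof -
  \<comment> \<open>After swapping the integrals and substituting \<rho> = |v| l, rescaling v to l v leaves the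
    factor int_1^oo d l^(-d-1) dl = 1.\<close>
  let ?d = "DIM('a)"
  define F where "F \<rho> v = indicator {h..} \<rho> *
      (indicator (ball 0 \<rho>) v * (ennreal (real ?d / \<rho>) * G (\<rho> *\<^sub>R (v /\<^sub>R norm v))))" for \<rho> and v :: 'a
  define M where "M l v = indicator {1<..} l *
      (indicator {y. h \<le> norm y} (l *\<^sub>R v) * (ennreal (real ?d / l) * G (l *\<^sub>R v)))" for l and v :: 'a
  define H where "H y = indicator {y. h \<le> norm y} y * G y" for y :: 'a
  have [measurable]: "H \<in> borel_measurable borel" unfolding H_def by measurable
  have "?L = (\<integral>\<^sup>+\<rho>. \<integral>\<^sup>+v. F \<rho> v \<partial>lborel \<partial>lborel)"
  proof (rule nn_integral_cong)
    fix \<rho> :: real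
    show "indicator {h..} \<rho> * (ennreal (\<rho> ^ (?d - 1) * real ?d) *
            (\<integral>\<^sup>+z. indicator (ball 0 1) z * G (\<rho> *\<^sub>R (z /\<^sub>R norm z)) \<partial>lborel)) = (\<integral>\<^sup>+v. F \<rho> v \<partial>lborel)"
      using sphere_integral_as_ball_integral[of G \<rho>] h by (cases "h \<le> \<rho>") (simp_all add: F_def)
  qed
  also have "\<dots> = (\<integral>\<^sup>+v. \<integral>\<^sup>+\<rho>. F \<rho> v \<partial>lborel \<partial>lborel)"
    by (rule nn_integral_lborel_swap) (unfold F_def indicator_def mem_ball dist_0_norm, measurable)
  also have "\<dots> = (\<integral>\<^sup>+v. \<integral>\<^sup>+l. M l v \<partial>lborel \<partial>lborel)"
    unfolding F_def M_def
    by (intro nn_integral_cong_AE eventually_mono[OF AE_lborel_singleton[of 0]] nn_integral_radial_substitution) auto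
  also have "\<dots> = (\<integral>\<^sup>+l. \<integral>\<^sup>+v. M l v \<partial>lborel \<partial>lborel)"
    by (rule nn_integral_lborel_swap) (unfold M_def, measurable)
  also have "\<dots> = (\<integral>\<^sup>+l. indicator {1<..} l * ennreal (real ?d / l ^ (?d + 1)) * ?I \<partial>lborel)"
  proof (rule nn_integral_cong)
    fix l :: real
    show "(\<integral>\<^sup>+v. M l v \<partial>lborel) = indicator {1<..} l * ennreal (real ?d / l ^ (?d + 1)) * ?I"
    proof (cases "1 < l")
      case True
      have "?I = ennreal (l ^ ?d) * (\<integral>\<^sup>+v. H (l *\<^sub>R v) \<partial>lborel)"
        using nn_integral_lborel_affine[of H l 0] True unfolding H_def by simp
      moreover have "(\<integral>\<^sup>+v. M l v \<partial>lborel) = ennreal (real ?d / l) * (\<integral>\<^sup>+v. H (l *\<^sub>R v) \<partial>lborel)"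
        using True by (subst nn_integral_cmult[symmetric]) (measurable, auto simp: M_def H_def mult_ac intro!: nn_integral_cong)
      moreover have "ennreal (real ?d / l) = ennreal (real ?d / l ^ (?d + 1)) * ennreal (l ^ ?d)"
        using True by (simp add: ennreal_mult[symmetric] field_simps)
      ultimately show ?thesis
        using True by (simp add: mult.assoc)
    qed (simp add: M_def)
  qed
  also have "\<dots> = (\<integral>\<^sup>+l. indicator {1<..} l * ennreal (real ?d / l ^ (?d + 1)) \<partial>lborel) * ?I"
    by (rule nn_integral_multc) measurable
  also have "\<dots> = ?I"
    using nn_integral_power_tail_eq_one[of ?d] DIM_positive[where 'a='a] by simp
  finally show ?thesis .
qed

lemma nn_integral_radial_outside_ball:
  fixes \<phi> :: "real \<Rightarrow> ennreal"
  assumes [measurable]: "\<phi> \<in> borel_measurable borel" and a: "a > 0"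
  shows "(\<integral>\<^sup>+y. indicator {y. a \<le> norm y} (y::'a::euclidean_space) * \<phi> (norm y) \<partial>lborel)
      = ennreal (real DIM('a) * unit_ball_vol DIM('a)) *
          (\<integral>\<^sup>+\<rho>. indicator {a..} \<rho> * ennreal (\<rho> ^ (DIM('a) - 1)) * \<phi> \<rho> \<partial>lborel)"
proof -
  let ?d = "DIM('a)"
  have sphere: "(\<integral>\<^sup>+z. indicator (ball 0 1) (z::'a) * \<phi> (norm (\<rho> *\<^sub>R (z /\<^sub>R norm z))) \<partial>lborel)
      = ennreal (unit_ball_vol ?d) * \<phi> \<rho>" if "\<rho> > 0" for \<rho>
  proof -
    have "(\<integral>\<^sup>+z. indicator (ball 0 1) (z::'a) * \<phi> (norm (\<rho> *\<^sub>R (z /\<^sub>R norm z))) \<partial>lborel)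
        = (\<integral>\<^sup>+z. \<phi> \<rho> * indicator (ball 0 1) (z::'a) \<partial>lborel)"
    proof (intro nn_integral_cong_AE eventually_mono[OF AE_lborel_singleton[of 0]])
      fix z :: 'a assume "z \<noteq> 0"
      then have "norm (\<rho> *\<^sub>R (z /\<^sub>R norm z)) = \<rho>" using that by simp
      then show "indicator (ball 0 1) z * \<phi> (norm (\<rho> *\<^sub>R (z /\<^sub>R norm z))) = \<phi> \<rho> * indicator (ball 0 1) z"
        by (simp only: mult.commute)
    qed
    then show ?thesis
      by (simp add: nn_integral_cmult_indicator emeasure_ball mult.commute)
  qed
  have "(\<integral>\<^sup>+y. indicator {y. a \<le> norm y} (y::'a) * \<phi> (norm y) \<partial>lborel)
     = (\<integral>\<^sup>+\<rho>. indicator {a..} \<rho> * (ennreal (\<rho> ^ (?d - 1) * real ?d) *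
            (\<integral>\<^sup>+z. indicator (ball 0 1) (z::'a) * \<phi> (norm (\<rho> *\<^sub>R (z /\<^sub>R norm z))) \<partial>lborel)) \<partial>lborel)"
    by (rule nn_integral_polar_outside_ball[symmetric]) (measurable, rule a)
  also have "\<dots> = (\<integral>\<^sup>+\<rho>. ennreal (real ?d * unit_ball_vol ?d) * (indicator {a..} \<rho> * ennreal (\<rho> ^ (?d - 1)) * \<phi> \<rho>) \<partial>lborel)"
  proof (rule nn_integral_cong)
    fix \<rho> :: real
    show "indicator {a..} \<rho> * (ennreal (\<rho> ^ (?d - 1) * real ?d) *
            (\<integral>\<^sup>+z. indicator (ball 0 1) (z::'a) * \<phi> (norm (\<rho> *\<^sub>R (z /\<^sub>R norm z))) \<partial>lborel))
        = ennreal (real ?d * unit_ball_vol ?d) * (indicator {a..} \<rho> * ennreal (\<rho> ^ (?d - 1)) * \<phi> \<rho>)"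
    proof (cases "a \<le> \<rho>")
      case True
      then have "\<rho> > 0" using a by simp
      then show ?thesis
        using True unfolding sphere[OF \<open>\<rho> > 0\<close>] by (simp add: ennreal_mult'[symmetric] mult_ac)
    qed simp
  qed
  also have "\<dots> = ennreal (real ?d * unit_ball_vol ?d) * (\<integral>\<^sup>+\<rho>. indicator {a..} \<rho> * ennreal (\<rho> ^ (?d - 1)) * \<phi> \<rho> \<partial>lborel)"
    by (rule nn_integral_cmult) measurable
  finally show ?thesis .
qed

lemma nn_integral_Icc_powr:
  assumes "0 < a" "a \<le> b"
    and F: "\<And>x. x > 0 \<Longrightarrow> (F has_real_derivative x powr q) (at x)"
  shows "(\<integral>\<^sup>+x. indicator {a..b} x * ennreal (x powr q) \<partial>lborel) = ennreal (F b - F a)"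
  unfolding mult.commute[of "indicator _ _"]
proof (rule nn_integral_has_integral_lebesgue')
  show "((\<lambda>x. x powr q) has_integral F b - F a) {a..b}"
  proof (rule fundamental_theorem_of_calculus[OF \<open>a \<le> b\<close>])
    fix x assume "x \<in> {a..b}"
    then have "x > 0" using \<open>0 < a\<close> by simp
    then show "(F has_vector_derivative x powr q) (at x within {a..b})"
      using F has_field_derivative_at_within has_real_derivative_iff_has_vector_derivative by metis
  qed
qed simp

definition truncated_moment :: "real \<Rightarrow> real \<Rightarrow> real \<Rightarrow> ennreal" where
  "truncated_moment R p h = (\<integral>\<^sup>+\<rho>. indicator {R..} \<rho> * ennreal (\<rho> powr p * min h \<rho>) \<partial>lborel)"

lemma truncated_moment_split:
  assumes "0 < R" "R \<le> h" and p: "p < -1"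
  shows "truncated_moment R p h
       = (\<integral>\<^sup>+\<rho>. indicator {R..h} \<rho> * ennreal (\<rho> powr (p+1)) \<partial>lborel) + ennreal (h powr (p+2) / -(p+1))"
proof -
  have h: "h > 0" using assms by simp
  have "truncated_moment R p h
      = (\<integral>\<^sup>+\<rho>. indicator {R..h} \<rho> * ennreal (\<rho> powr (p+1)) + ennreal h * (indicator {h..} \<rho> * ennreal (\<rho> powr p)) \<partial>lborel)"
    unfolding truncated_moment_def
  proof (intro nn_integral_cong_AE eventually_mono[OF AE_lborel_singleton[of h]])
    fix \<rho> :: real assume "\<rho> \<noteq> h"
    then show "indicator {R..} \<rho> * ennreal (\<rho> powr p * min h \<rho>)
      = indicator {R..h} \<rho> * ennreal (\<rho> powr (p+1)) + ennreal h * (indicator {h..} \<rho> * ennreal (\<rho> powr p))"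
      using assms by (cases "\<rho> < h") (auto simp: indicator_def powr_add ennreal_mult'[symmetric] mult.commute min_def)
  qed
  also have "\<dots> = (\<integral>\<^sup>+\<rho>. indicator {R..h} \<rho> * ennreal (\<rho> powr (p+1)) \<partial>lborel)
       + ennreal h * ennreal (h powr (p+1) / -(p+1))"
    using h p by (subst nn_integral_add) (auto simp: nn_integral_cmult nn_integral_powr_tail)
  also have "ennreal h * ennreal (h powr (p+1) / -(p+1)) = ennreal (h powr (p+2) / -(p+1))"
    using h p by (simp add: ennreal_mult'[symmetric] powr_add power2_eq_square)
  finally show ?thesis .
qed

lemma truncated_moment_log:
  assumes "0 < R" "R \<le> h"
  shows "truncated_moment R (-2) h = ennreal (ln h - ln R + 1)"
proof -
  have "(\<integral>\<^sup>+\<rho>. indicator {R..h} \<rho> * ennreal (\<rho> powr (-2+1)) \<partial>lborel) = ennreal (ln h - ln R)"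
    using assms by (intro nn_integral_Icc_powr) (auto intro!: derivative_eq_intros simp: powr_minus_divide)
  moreover have "ennreal (ln h - ln R + 1) = ennreal (ln h - ln R) + 1"
    using assms by (simp add: ennreal_plus)
  ultimately show ?thesis
    using assms by (simp add: truncated_moment_split)
qed

lemma truncated_moment_powr:
  assumes "0 < R" "R \<le> h" and p: "-2 < p" "p < -1"
  shows "truncated_moment R p h = ennreal ((h powr (p+2) - R powr (p+2)) / (p+2) + h powr (p+2) / -(p+1))"
proof -
  have "(\<integral>\<^sup>+\<rho>. indicator {R..h} \<rho> * ennreal (\<rho> powr (p+1)) \<partial>lborel) = ennreal ((h powr (p+2) - R powr (p+2)) / (p+2))"
  proof -
    have "(\<integral>\<^sup>+\<rho>. indicator {R..h} \<rho> * ennreal (\<rho> powr (p+1)) \<partial>lborel) = ennreal (h powr (p+2) / (p+2) - R powr (p+2) / (p+2))"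
      using assms by (intro nn_integral_Icc_powr) (auto intro!: derivative_eq_intros simp: add.commute)
    then show ?thesis by (simp add: diff_divide_distrib)
  qed
  moreover have "0 \<le> (h powr (p+2) - R powr (p+2)) / (p+2)"
    using assms by (auto intro!: divide_nonneg_pos powr_mono2)
  ultimately show ?thesis
    using assms by (simp add: truncated_moment_split ennreal_plus[symmetric] del: ennreal_plus)
qed

lemma nn_integral_outside_ball_eq_truncated_moment:
  assumes "c \<ge> 0" "R > 0" "h > 0"
  shows "(\<integral>\<^sup>+y. indicator {y. R \<le> norm y} (y::'a::euclidean_space) * ennreal (c * norm y powr (-\<beta>) * min h (norm y)) \<partial>lborel)
       = ennreal (c * real DIM('a) * unit_ball_vol DIM('a)) * truncated_moment R (real DIM('a) - 1 - \<beta>) h"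
proof -
  let ?d = "DIM('a)"
  have "(\<integral>\<^sup>+y. indicator {y. R \<le> norm y} (y::'a) * ennreal (c * norm y powr (-\<beta>) * min h (norm y)) \<partial>lborel)
      = ennreal (real ?d * unit_ball_vol ?d) *
          (\<integral>\<^sup>+\<rho>. indicator {R..} \<rho> * ennreal (\<rho> ^ (?d - 1)) * ennreal (c * \<rho> powr (-\<beta>) * min h \<rho>) \<partial>lborel)"
    using assms(2) by (intro nn_integral_radial_outside_ball) auto
  also have "(\<integral>\<^sup>+\<rho>. indicator {R..} \<rho> * ennreal (\<rho> ^ (?d - 1)) * ennreal (c * \<rho> powr (-\<beta>) * min h \<rho>) \<partial>lborel)
      = ennreal c * truncated_moment R (real ?d - 1 - \<beta>) h"
    unfolding truncated_moment_def
  proof (subst nn_integral_cmult[symmetric], measurable, rule nn_integral_cong)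
    fix \<rho> :: real
    show "indicator {R..} \<rho> * ennreal (\<rho> ^ (?d - 1)) * ennreal (c * \<rho> powr (-\<beta>) * min h \<rho>)
        = ennreal c * (indicator {R..} \<rho> * ennreal (\<rho> powr (real ?d - 1 - \<beta>) * min h \<rho>))"
    proof (cases "R \<le> \<rho>")
      case True
      then have \<rho>: "\<rho> > 0" using assms by simp
      have "\<rho> ^ (?d - 1) = \<rho> powr (real ?d - 1)"
        using \<rho> DIM_positive[where 'a='a] by (simp add: powr_realpow[symmetric] of_nat_diff)
      then have "\<rho> ^ (?d - 1) * (c * \<rho> powr (-\<beta>) * min h \<rho>) = c * (\<rho> powr (real ?d - 1 - \<beta>) * min h \<rho>)"
        by (simp add: powr_diff powr_minus divide_inverse mult_ac)
      then show ?thesis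
        using True \<rho> assms by (simp add: ennreal_mult'[symmetric] mult.assoc[symmetric])
    qed simp
  qed
  finally show ?thesis
    using assms by (simp add: ennreal_mult' mult_ac)
qed

lemma truncated_moment_asymp:
  assumes \<beta>: "real N < \<beta>" "\<beta> \<le> real N + 1" and R: "R > 0"
  shows "\<exists>K1 K2 H. K1 > 0 \<and> K2 > 0 \<and> H \<ge> R \<and> (\<forall>h\<ge>H. 1 \<le> gfun N \<beta> h \<and>
     ennreal (K1 * gfun N \<beta> h) \<le> truncated_moment R (real N - 1 - \<beta>) h \<and>
     truncated_moment R (real N - 1 - \<beta>) h \<le> ennreal (K2 * gfun N \<beta> h))"
proof (cases "\<beta> = real N + 1")
  case True
  then have p: "real N - 1 - \<beta> = -2" and g: "gfun N \<beta> h = ln h" for h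
    by (simp_all add: gfun_def)
  show ?thesis
  proof (rule exI[of _ "1/2"], rule exI[of _ 3], rule exI[of _ "max R (max (R^2) (max (1/R) (exp 1)))"],
      intro conjI allI impI)
    fix h assume "max R (max (R^2) (max (1/R) (exp 1))) \<le> h"
    then have h: "R \<le> h" "R^2 \<le> h" "1/R \<le> h" "exp 1 \<le> h" by auto
    then have "h > 0" using R by simp
    have "1 \<le> ln h" using h(4) \<open>h > 0\<close> by (subst ln_ge_iff) auto
    moreover have "2 * ln R \<le> ln h"
      using h(2) R by (metis ln_le_cancel_iff ln_realpow zero_less_power of_nat_numeral \<open>h > 0\<close>)
    moreover have "- ln R \<le> ln h"
      using h(3) R by (metis ln_inverse ln_le_cancel_iff inverse_eq_divide \<open>h > 0\<close> positive_imp_inverse_positive)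
    moreover note truncated_moment_log[OF R h(1)]
    ultimately show "1 \<le> gfun N \<beta> h"
      and "ennreal (1/2 * gfun N \<beta> h) \<le> truncated_moment R (real N - 1 - \<beta>) h"
      and "truncated_moment R (real N - 1 - \<beta>) h \<le> ennreal (3 * gfun N \<beta> h)"
      unfolding p g by (auto intro!: ennreal_leI simp del: ennreal_plus)
  qed auto
next
  case False
  define p where "p = real N - 1 - \<beta>"
  have p: "-2 < p" "p < -1" using \<beta> False by (auto simp: p_def)
  have g: "gfun N \<beta> h = h powr (p+2)" for h
    using False by (simp add: gfun_def p_def algebra_simps)
  show ?thesis
    unfolding p_def[symmetric]
  proof (rule exI[of _ "1/-(p+1)"], rule exI[of _ "1/(p+2) + 1/-(p+1)"], rule exI[of _ "max R 1"],
      intro conjI allI impI)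
    show "1/-(p+1) > 0" "1/(p+2) + 1/-(p+1) > 0" using p by (auto intro: add_pos_pos)
    fix h assume "max R 1 \<le> h"
    then have h: "R \<le> h" "1 \<le> h" by auto
    define A where "A = (h powr (p+2) - R powr (p+2)) / (p+2)"
    have "0 \<le> A" "A \<le> h powr (p+2) / (p+2)"
      using p R h by (auto simp: A_def intro!: divide_nonneg_pos divide_right_mono powr_mono2)
    moreover have "(1/(p+2) + 1/-(p+1)) * h powr (p+2) = h powr (p+2) / (p+2) + h powr (p+2) / -(p+1)"
      by (simp add: distrib_right)
    ultimately show "1 \<le> gfun N \<beta> h"
      and "ennreal (1/-(p+1) * gfun N \<beta> h) \<le> truncated_moment R p h"
      and "truncated_moment R p h \<le> ennreal ((1/(p+2) + 1/-(p+1)) * gfun N \<beta> h)"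
      unfolding g truncated_moment_powr[OF R h(1) p] A_def[symmetric] using p h
      by (auto intro!: ennreal_leI ge_one_powr_ge_zero)
  qed simp
qed

lemma borel_measurable_norm_comp[measurable]:
  assumes "continuous_on {0..} J"
  shows "(\<lambda>x::'a::euclidean_space. J (norm x)) \<in> borel_measurable borel"
  by (intro borel_measurable_continuous_onI continuous_on_compose2[OF assms continuous_on_norm_id]) auto

lemma borel_measurable_Jstar[measurable]:
  assumes "continuous_on {0..} J"
  shows "Jstar TYPE('m::finite) J \<in> borel_measurable borel"
proof -
  have "(\<lambda>p::real \<times> (real^'m). ennreal (J (norm p))) \<in> borel_measurable (lborel \<Otimes>\<^sub>M lborel)"
    using assms by (intro borel_measurable_lborel_pair) measurable
  from lborel.borel_measurable_nn_integral_fst[OF this] show ?thesis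
    unfolding Jstar_def[abs_def] by (simp add: measurable_lborel1)
qed

definition flat_weight :: "real \<Rightarrow> real \<Rightarrow> real" where
  "flat_weight h l = min h (max 0 (-l))"

lemma flat_weight_eq_emeasure:
  assumes "h > 0"
  shows "emeasure lborel {r. 0 \<le> r \<and> r \<le> h \<and> h \<le> r - l} = ennreal (flat_weight h l)"
proof -
  have "{r. 0 \<le> r \<and> r \<le> h \<and> h \<le> r - l} = {max 0 (l+h)..h}" by auto
  then show ?thesis
    using assms by (simp add: emeasure_lborel_Icc_eq flat_weight_def max_def min_def)
qed

lemma Istar_eq_nn_integral_Jstar:
  assumes [measurable]: "continuous_on {0..} J" and h: "h > 0"
  shows "Istar TYPE('m::finite) J h = (\<integral>\<^sup>+l. Jstar TYPE('m) J l * ennreal (flat_weight h l) \<partial>lborel)"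
proof -
  let ?Js = "Jstar TYPE('m) J"
  have "(\<integral>\<^sup>+\<rho>. indicator {h..} \<rho> * ?Js (r - \<rho>) \<partial>lborel) = (\<integral>\<^sup>+l. indicator {h..} (r - l) * ?Js l \<partial>lborel)" for r
    using nn_integral_lborel_reflect[of "\<lambda>\<rho>. indicator {h..} \<rho> * ?Js (r - \<rho>)" r] by simp
  then have "Istar TYPE('m) J h = (\<integral>\<^sup>+r. \<integral>\<^sup>+l. indicator {0..h} r * (indicator {h..} (r - l) * ?Js l) \<partial>lborel \<partial>lborel)"
    unfolding Istar_def by (intro nn_integral_cong) (simp add: nn_integral_cmult)
  also have "\<dots> = (\<integral>\<^sup>+l. \<integral>\<^sup>+r. ?Js l * indicator {r. 0 \<le> r \<and> r \<le> h \<and> h \<le> r - l} r \<partial>lborel \<partial>lborel)"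
    by (subst nn_integral_lborel_swap) (measurable, auto simp: indicator_def intro!: nn_integral_cong)
  also have "\<dots> = (\<integral>\<^sup>+l. ?Js l * ennreal (flat_weight h l) \<partial>lborel)"
    using h by (simp add: nn_integral_cmult_indicator flat_weight_eq_emeasure)
  finally show ?thesis .
qed

lemma Istar_eq_nn_integral_flat_weight:
  assumes [measurable]: "continuous_on {0..} J" and h: "h > 0"
  shows "Istar TYPE('m::finite) J h
       = (\<integral>\<^sup>+x. ennreal (J (norm (x :: real \<times> (real^'m)))) * ennreal (flat_weight h (fst x)) \<partial>lborel)"
proof -
  have m: "(\<lambda>x. ennreal (J (norm (x :: real \<times> (real^'m)))) * ennreal (flat_weight h (fst x)))
      \<in> borel_measurable (lborel \<Otimes>\<^sub>M lborel)"
    by (rule borel_measurable_lborel_pair) (unfold flat_weight_def, measurable)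
  have "Istar TYPE('m) J h
      = (\<integral>\<^sup>+l. \<integral>\<^sup>+x'. ennreal (J (norm (l, x' :: real^'m))) * ennreal (flat_weight h l) \<partial>lborel \<partial>lborel)"
    unfolding Istar_eq_nn_integral_Jstar[OF assms] Jstar_def
    by (intro nn_integral_cong nn_integral_multc[symmetric]) measurable
  also have "\<dots> = (\<integral>\<^sup>+x. ennreal (J (norm (x :: real \<times> (real^'m)))) * ennreal (flat_weight h (fst x))
      \<partial>(lborel \<Otimes>\<^sub>M lborel))"
    using lborel.nn_integral_fst[OF m] by simp
  finally show ?thesis by (simp add: lborel_prod)
qed

definition sphere_weight :: "real \<Rightarrow> real \<times> (real^'m::finite) \<Rightarrow> ennreal" where
  "sphere_weight h x = emeasure lborel {r. 0 \<le> r \<and> r \<le> h \<and> h \<le> norm ((r, 0) - x)}"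

lemma Itilde_eq_nn_integral_sphere_weight:
  assumes [measurable]: "continuous_on {0..} J" and h: "h > 0"
  shows "Itilde TYPE('m::finite) J h
       = (\<integral>\<^sup>+x. ennreal (J (norm (x :: real \<times> (real^'m)))) * sphere_weight h x \<partial>lborel)"
proof -
  let ?JJ = "\<lambda>x::real \<times> (real^'m). ennreal (J (norm x))"
  have shell: "(\<integral>\<^sup>+\<rho>. indicator {h..} \<rho> * Jtilde TYPE('m) J r \<rho> \<partial>lborel)
      = (\<integral>\<^sup>+x. indicator {x. h \<le> norm ((r, 0) - x)} x * ?JJ x \<partial>lborel)" for r
  proof -
    have "(\<integral>\<^sup>+\<rho>. indicator {h..} \<rho> * Jtilde TYPE('m) J r \<rho> \<partial>lborel)
        = (\<integral>\<^sup>+y. indicator {y. h \<le> norm y} y * ?JJ ((r, 0) - y) \<partial>lborel)"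
      unfolding Jtilde_def sphere_int_def dimN_def
      using nn_integral_polar_outside_ball[of "\<lambda>y. ?JJ ((r, 0) - y)", OF _ h] by simp
    also have "\<dots> = (\<integral>\<^sup>+x. indicator {x. h \<le> norm ((r, 0) - x)} x * ?JJ x \<partial>lborel)"
      using nn_integral_lborel_reflect[of "\<lambda>y. indicator {y. h \<le> norm y} y * ?JJ ((r, 0) - y)" "(r, 0)"]
      by (simp add: indicator_def)
    finally show ?thesis .
  qed
  have "Itilde TYPE('m) J h
      = (\<integral>\<^sup>+r. \<integral>\<^sup>+x. indicator {0..h} r * (indicator {x. h \<le> norm ((r, 0) - x)} x * ?JJ x) \<partial>lborel \<partial>lborel)"
    unfolding Itilde_def shell by (intro nn_integral_cong) (simp add: nn_integral_cmult)
  also have "\<dots> = (\<integral>\<^sup>+x. \<integral>\<^sup>+r. ?JJ x * indicator {r. 0 \<le> r \<and> r \<le> h \<and> h \<le> norm ((r, 0) - x)} r \<partial>lborel \<partial>lborel)"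
    by (subst nn_integral_lborel_swap) (unfold indicator_def, measurable, auto intro!: nn_integral_cong)
  also have "\<dots> = (\<integral>\<^sup>+x. ?JJ x * sphere_weight h x \<partial>lborel)"
    by (simp add: nn_integral_cmult_indicator sphere_weight_def)
  finally show ?thesis .
qed

lemma sphere_weight_set_in_sets [measurable]:
  "{r. 0 \<le> r \<and> r \<le> h \<and> h \<le> norm ((r, 0) - (x::real \<times> (real^'m::finite)))} \<in> sets lborel"
proof -
  have "Measurable.pred borel (\<lambda>r::real. 0 \<le> r \<and> r \<le> h \<and> h \<le> norm ((r, 0) - x))" by measurable
  then show ?thesis by (simp add: pred_def)
qed

lemma flat_weight_le_sphere_weight:
  assumes "h > 0"
  shows "ennreal (flat_weight h (fst x)) \<le> sphere_weight h (x::real \<times> (real^'m::finite))"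
  unfolding flat_weight_eq_emeasure[OF assms, symmetric] sphere_weight_def
proof (rule emeasure_mono[OF _ sphere_weight_set_in_sets], safe)
  fix r assume "0 \<le> r" "r \<le> h" "h \<le> r - fst x"
  moreover have "r - fst x \<le> norm ((r, 0::real^'m) - x)"
    using norm_fst_le[of "r - fst x" "0 - snd x"] by (cases x) simp
  ultimately show "h \<le> norm ((r, 0) - x)" by linarith
qed

lemma sphere_weight_le_min_norm:
  assumes "h > 0"
  shows "sphere_weight h (x::real \<times> (real^'m::finite)) \<le> ennreal (min h (norm x))"
proof -
  have "sphere_weight h x \<le> emeasure lborel {0..h}"
    unfolding sphere_weight_def by (rule emeasure_mono) auto
  moreover have "sphere_weight h x \<le> emeasure lborel {h - norm x..h}"
    unfolding sphere_weight_def
  proof (rule emeasure_mono, safe)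
    fix r assume r: "0 \<le> r" "r \<le> h" "h \<le> norm ((r, 0::real^'m) - x)"
    have "norm ((r, 0::real^'m) - x) \<le> norm (r, 0::real^'m) + norm x" by (rule norm_triangle_ineq4)
    then show "r \<in> {h - norm x..h}" using r by (auto simp: norm_Pair)
  qed auto
  ultimately show ?thesis
    using assms by (cases "h \<le> norm x") (auto simp: min_def)
qed

lemma Istar_le_Itilde:
  assumes "continuous_on {0..} J" "h > 0"
  shows "Istar TYPE('m::finite) J h \<le> Itilde TYPE('m) J h"
  unfolding Istar_eq_nn_integral_flat_weight[OF assms] Itilde_eq_nn_integral_sphere_weight[OF assms]
  by (intro nn_integral_mono mult_left_mono flat_weight_le_sphere_weight assms(2)) simp

lemma Itilde_le_nn_integral_min_norm:
  assumes "continuous_on {0..} J" "h > 0"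
  shows "Itilde TYPE('m::finite) J h
       \<le> (\<integral>\<^sup>+x. ennreal (J (norm (x :: real \<times> (real^'m)))) * ennreal (min h (norm x)) \<partial>lborel)"
  unfolding Itilde_eq_nn_integral_sphere_weight[OF assms]
  by (intro nn_integral_mono mult_left_mono sphere_weight_le_min_norm assms(2)) simp

lemma nn_integral_min_norm_le_truncated_moment:
  fixes J :: "real \<Rightarrow> real"
  assumes [measurable]: "continuous_on {0..} J"
    and J_nonneg: "\<forall>t\<ge>0. J t \<ge> 0"
    and J_int: "(\<integral>\<^sup>+ x. ennreal (J (norm (x :: real \<times> (real^'m::finite)))) \<partial>lborel) = 1"
    and tail: "\<forall>\<eta>\<ge>R. J \<eta> \<le> c2 * \<eta> powr (-\<beta>)" and c2: "c2 > 0" and R: "R > 0" and h: "h > 0"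
  shows "(\<integral>\<^sup>+x. ennreal (J (norm (x :: real \<times> (real^'m)))) * ennreal (min h (norm x)) \<partial>lborel)
     \<le> ennreal R + ennreal (c2 * real DIM(real \<times> (real^'m)) * unit_ball_vol DIM(real \<times> (real^'m))) *
          truncated_moment R (real CARD('m) - \<beta>) h"
proof -
  define \<phi> where "\<phi> x = ennreal (c2 * norm x powr (-\<beta>) * min h (norm x))" for x :: "real \<times> (real^'m)"
  have [measurable]: "\<phi> \<in> borel_measurable borel" unfolding \<phi>_def by measurable
  have "ennreal (J (norm x)) * ennreal (min h (norm x))
      \<le> ennreal R * ennreal (J (norm x)) + indicator {y. R \<le> norm y} x * \<phi> x" for x
  proof (cases "R \<le> norm x")
    case True
    then have "J (norm x) * min h (norm x) \<le> c2 * norm x powr (-\<beta>) * min h (norm x)"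
      using tail h by (intro mult_right_mono) auto
    then have "ennreal (J (norm x)) * ennreal (min h (norm x)) \<le> \<phi> x"
      using J_nonneg h unfolding \<phi>_def by (simp add: ennreal_mult[symmetric] ennreal_leI)
    then show ?thesis using True by (simp add: add_increasing)
  next
    case False
    then have "ennreal (J (norm x)) * ennreal (min h (norm x)) \<le> ennreal R * ennreal (J (norm x))"
      by (subst mult.commute) (intro mult_right_mono ennreal_leI, auto)
    then show ?thesis by (simp add: add_increasing2)
  qed
  then have "(\<integral>\<^sup>+x. ennreal (J (norm (x :: real \<times> (real^'m)))) * ennreal (min h (norm x)) \<partial>lborel)
      \<le> ennreal R * (\<integral>\<^sup>+x. ennreal (J (norm (x :: real \<times> (real^'m)))) \<partial>lborel)
         + (\<integral>\<^sup>+x. indicator {y. R \<le> norm y} x * \<phi> x \<partial>lborel)"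
    by (subst nn_integral_cmult[symmetric], measurable, subst nn_integral_add[symmetric], measurable)
       (rule nn_integral_mono)
  also have "(\<integral>\<^sup>+x. indicator {y. R \<le> norm y} x * \<phi> x \<partial>lborel)
      = ennreal (c2 * real DIM(real \<times> (real^'m)) * unit_ball_vol DIM(real \<times> (real^'m))) *
          truncated_moment R (real CARD('m) - \<beta>) h"
    unfolding \<phi>_def using nn_integral_outside_ball_eq_truncated_moment[of c2 R h, where 'a="real \<times> (real^'m)"] c2 R h
    by simp
  finally show ?thesis using J_int by simp
qed

lemma Jstar_ge_powr:
  assumes tail: "\<forall>\<eta>\<ge>R. c1 * \<eta> powr (-\<beta>) \<le> J \<eta>" and "R > 0" "c1 > 0" "\<beta> > 0" and l: "R \<le> \<bar>l\<bar>"
  shows "ennreal (c1 * unit_ball_vol CARD('m) * sqrt 2 powr (-\<beta>) * \<bar>l\<bar> powr (real CARD('m) - \<beta>))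
       \<le> Jstar TYPE('m::finite) J l"
proof -
  define a where "a = \<bar>l\<bar>"
  have a: "a > 0" using l \<open>R > 0\<close> by (simp add: a_def)
  define c where "c = c1 * (sqrt 2 * a) powr (-\<beta>)"
  have c_le: "ennreal c * indicator (ball 0 a) x' \<le> ennreal (J (norm (l, x' :: real^'m)))" for x'
  proof (cases "x' \<in> ball 0 a")
    case True
    have "a \<le> norm (l, x')" using norm_fst_le[of l x'] by (simp add: a_def)
    moreover have "norm (l, x') \<le> sqrt 2 * a"
    proof -
      have "norm x' ^ 2 \<le> a ^ 2" using True by (intro power_mono) auto
      then have "norm (l, x') \<le> sqrt (2 * a ^ 2)"
        by (simp add: norm_Pair a_def)
      also have "\<dots> = sqrt 2 * a" using a by (simp add: real_sqrt_mult)
      finally show ?thesis .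
    qed
    ultimately have "c \<le> c1 * norm (l, x') powr (-\<beta>)" and "R \<le> norm (l, x')"
      using a l assms(3,4) unfolding c_def a_def by (auto intro!: mult_left_mono powr_mono2')
    then show ?thesis using True tail by (auto intro: ennreal_leI order_trans)
  qed simp
  have "ennreal (c1 * unit_ball_vol CARD('m) * sqrt 2 powr (-\<beta>) * \<bar>l\<bar> powr (real CARD('m) - \<beta>))
      = ennreal c * ennreal (unit_ball_vol CARD('m) * a ^ CARD('m))"
  proof -
    have "c1 * unit_ball_vol CARD('m) * sqrt 2 powr (-\<beta>) * \<bar>l\<bar> powr (real CARD('m) - \<beta>)
        = c * (unit_ball_vol CARD('m) * a ^ CARD('m))"
      using a by (simp add: c_def a_def powr_mult powr_diff powr_minus divide_inverse powr_realpow mult_ac)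
    moreover have "c \<ge> 0" "unit_ball_vol CARD('m) * a ^ CARD('m) \<ge> 0"
      using a assms(3) by (simp_all add: c_def)
    ultimately show ?thesis by (simp only: ennreal_mult[symmetric])
  qed
  also have "\<dots> = (\<integral>\<^sup>+x'. ennreal c * indicator (ball 0 a) (x' :: real^'m) \<partial>lborel)"
    using a by (simp add: nn_integral_cmult_indicator emeasure_ball)
  also have "\<dots> \<le> Jstar TYPE('m) J l"
    unfolding Jstar_def by (intro nn_integral_mono c_le)
  finally show ?thesis .
qed

lemma Istar_ge_truncated_moment:
  assumes [measurable]: "continuous_on {0..} J"
    and tail: "\<forall>\<eta>\<ge>R. c1 * \<eta> powr (-\<beta>) \<le> J \<eta>" and R: "R > 0" and "c1 > 0" "\<beta> > 0" and h: "h > 0"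
  shows "ennreal (c1 * unit_ball_vol CARD('m) * sqrt 2 powr (-\<beta>)) * truncated_moment R (real CARD('m) - \<beta>) h
       \<le> Istar TYPE('m::finite) J h"
proof -
  define c where "c = c1 * unit_ball_vol CARD('m) * sqrt 2 powr (-\<beta>)"
  have "c \<ge> 0" using \<open>c1 > 0\<close> by (simp add: c_def)
  define f where "f s = ennreal c * (indicator {R..} s * ennreal (s powr (real CARD('m) - \<beta>) * min h s))" for s
  have [measurable]: "f \<in> borel_measurable borel" unfolding f_def by measurable
  have "ennreal c * truncated_moment R (real CARD('m) - \<beta>) h = (\<integral>\<^sup>+s. f s \<partial>lborel)"
    unfolding f_def truncated_moment_def by (rule nn_integral_cmult[symmetric]) measurable
  also have "\<dots> = (\<integral>\<^sup>+l. f (0 - l) \<partial>lborel)"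
    by (rule nn_integral_lborel_reflect) measurable
  also have "\<dots> \<le> (\<integral>\<^sup>+l. Jstar TYPE('m) J l * ennreal (flat_weight h l) \<partial>lborel)"
  proof (rule nn_integral_mono)
    fix l :: real
    show "f (0 - l) \<le> Jstar TYPE('m) J l * ennreal (flat_weight h l)"
    proof (cases "R \<le> -l")
      case True
      then have "f (0 - l) = ennreal (c * \<bar>l\<bar> powr (real CARD('m) - \<beta>)) * ennreal (flat_weight h l)"
        using R h \<open>c \<ge> 0\<close> by (simp add: f_def flat_weight_def ennreal_mult'[symmetric] mult.assoc)
      also have "\<dots> \<le> Jstar TYPE('m) J l * ennreal (flat_weight h l)"
        using Jstar_ge_powr[OF tail R \<open>c1 > 0\<close> \<open>\<beta> > 0\<close>, of l, where 'm='m] True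
        by (intro mult_right_mono) (simp_all add: c_def)
      finally show ?thesis .
    qed (simp add: f_def)
  qed
  also have "\<dots> = Istar TYPE('m) J h"
    by (rule Istar_eq_nn_integral_Jstar[OF assms(1) h, symmetric])
  finally show ?thesis unfolding c_def .
qed

theorem lemma7p1:
  fixes J :: "real \<Rightarrow> real" and \<beta> c1 c2 R :: real
  defines "N \<equiv> dimN TYPE('m::finite)"
  assumes J_cont: "continuous_on {0..} J"
    and J_bdd: "\<exists>M. \<forall>t\<ge>0. \<bar>J t\<bar> \<le> M"
    and J_nonneg: "\<forall>t\<ge>0. J t \<ge> 0"
    and J_0: "J 0 > 0"
    and J_int: "(\<integral>\<^sup>+ x. ennreal (J (norm (x :: real \<times> (real^'m)))) \<partial>lborel) = 1"
    and beta: "real N < \<beta>" "\<beta> \<le> real N + 1"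
    and c: "c1 > 0" "c2 > 0" "R > 0"
    and J_tail: "\<forall>\<eta>\<ge>R. c1 * \<eta> powr (-\<beta>) \<le> J \<eta> \<and> J \<eta> \<le> c2 * \<eta> powr (-\<beta>)"
  shows "\<exists>C1 C2 H. C1 > 0 \<and> C2 > 0 \<and> H > 0 \<and> (\<forall>h\<ge>H.
      ennreal (C1 * gfun N \<beta> h) \<le> Istar TYPE('m) J h \<and> Istar TYPE('m) J h \<le> ennreal (C2 * gfun N \<beta> h) \<and>
      ennreal (C1 * gfun N \<beta> h) \<le> Itilde TYPE('m) J h \<and> Itilde TYPE('m) J h \<le> ennreal (C2 * gfun N \<beta> h))"
proof -
  have N: "real N - 1 - \<beta> = real CARD('m) - \<beta>" "\<beta> > 0"
    using beta by (simp_all add: N_def dimN_def)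
  let ?Q = "truncated_moment R (real CARD('m) - \<beta>)"
  obtain K1 K2 H where K: "K1 > 0" "K2 > 0" "H \<ge> R" and
    KH: "\<And>h. h \<ge> H \<Longrightarrow> 1 \<le> gfun N \<beta> h \<and> ennreal (K1 * gfun N \<beta> h) \<le> ?Q h \<and> ?Q h \<le> ennreal (K2 * gfun N \<beta> h)"
    using truncated_moment_asymp[OF beta c(3)] unfolding N by blast
  define cL where "cL = c1 * unit_ball_vol CARD('m) * sqrt 2 powr (-\<beta>)"
  define cU where "cU = c2 * real DIM(real \<times> (real^'m)) * unit_ball_vol DIM(real \<times> (real^'m))"
  have "cL > 0" "cU > 0" using c by (simp_all add: cL_def cU_def)
  show ?thesis
  proof (rule exI[of _ "cL * K1"], rule exI[of _ "R + cU * K2"], rule exI[of _ H], intro conjI allI impI)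
    fix h assume "H \<le> h"
    then have h: "h > 0" using K c by simp
    from KH[OF \<open>H \<le> h\<close>] have g: "1 \<le> gfun N \<beta> h" "ennreal (K1 * gfun N \<beta> h) \<le> ?Q h" "?Q h \<le> ennreal (K2 * gfun N \<beta> h)"
      by auto
    have "ennreal (cL * K1 * gfun N \<beta> h) \<le> ennreal cL * ?Q h"
      using g(1,2) \<open>cL > 0\<close> K by (simp add: ennreal_mult mult.assoc mult_left_mono)
    also have "\<dots> \<le> Istar TYPE('m) J h"
      unfolding cL_def using J_tail c \<open>\<beta> > 0\<close> by (intro Istar_ge_truncated_moment J_cont h) auto
    finally show lower: "ennreal (cL * K1 * gfun N \<beta> h) \<le> Istar TYPE('m) J h" .
    have "Itilde TYPE('m) J h \<le> ennreal R + ennreal cU * ?Q h"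
      unfolding cU_def using J_tail c
      by (intro order_trans[OF Itilde_le_nn_integral_min_norm nn_integral_min_norm_le_truncated_moment] J_cont J_nonneg J_int h) auto
    also have "\<dots> \<le> ennreal (R + cU * (K2 * gfun N \<beta> h))"
      using g \<open>cU > 0\<close> K c by (simp add: ennreal_mult ennreal_plus mult_left_mono)
    also have "\<dots> \<le> ennreal ((R + cU * K2) * gfun N \<beta> h)"
      using g(1) c by (intro ennreal_leI) (simp add: algebra_simps)
    finally show upper: "Itilde TYPE('m) J h \<le> ennreal ((R + cU * K2) * gfun N \<beta> h)" .
    have "Istar TYPE('m) J h \<le> Itilde TYPE('m) J h" by (rule Istar_le_Itilde[OF J_cont h])
    with lower upper show "ennreal (cL * K1 * gfun N \<beta> h) \<le> Itilde TYPE('m) J h"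
      and "Istar TYPE('m) J h \<le> ennreal ((R + cU * K2) * gfun N \<beta> h)" by (auto intro: order_trans)
  qed (use K c \<open>cL > 0\<close> \<open>cU > 0\<close> in \<open>auto intro: add_pos_pos\<close>)
qed

end
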